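(* Let $s\in(0,1/2]$. For all $a,\ell\in\mathbb N$ with $2s\ell>1$, \[\sum_{M=1}^{\infty}\prod_{i=0}^{\ell}\frac{1}{(a+iM)^{2s}}\le\frac{1}{a^{2s\ell-1}}\cdot\frac{2s\ell}{2s\ell-1}.\] *)

theory Defs
  imports "HOL-Analysis.Analysis"
begin

end

theory Submission
  imports Defs
begin

text \<open>Dropping the factor \<open>i = 0\<close> (which is at most 1) and using \<open>a + iM \<ge> a + M\<close> for \<open>i \<ge> 1\<close>,
  the \<open>M\<close>-th term is at most \<open>(a + M)\<^sup>-\<^sup>p\<close> with \<open>p = 2s\<ell> > 1\<close>. By the mean value theorem,
  \<open>(x + 1)\<^sup>-\<^sup>p \<le> (x\<^sup>1\<^sup>-\<^sup>p - (x + 1)\<^sup>1\<^sup>-\<^sup>p) / (p - 1)\<close>, so the series is dominated by a telescoping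
  series with sum \<open>a\<^sup>1\<^sup>-\<^sup>p / (p - 1)\<close>, which is even below the claimed bound.\<close>

lemma powr_succ_le_diff_powr:
  fixes x p :: real
  assumes "0 < x" "1 < p"
  shows "(x + 1) powr (- p) \<le> (x powr (1 - p) - (x + 1) powr (1 - p)) / (p - 1)"
proof -
  have "\<And>y. x \<le> y \<Longrightarrow> y \<le> x + 1 \<Longrightarrow>
      ((\<lambda>y. y powr (1 - p)) has_real_derivative (1 - p) * y powr (1 - p - 1)) (at y)"
    using assms by (intro has_real_derivative_powr) auto
  from MVT2[of x "x + 1", OF _ this]
  obtain z where z: "x < z" "z < x + 1"
    "(x + 1) powr (1 - p) - x powr (1 - p) = (x + 1 - x) * ((1 - p) * z powr (1 - p - 1))"
    by auto
  have diff_eq: "x powr (1 - p) - (x + 1) powr (1 - p) = (p - 1) * z powr (- p)"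
    using z(3) by (simp add: algebra_simps)
  have "(x + 1) powr (- p) \<le> z powr (- p)"
    using z assms by (intro powr_mono2') auto
  then have "(p - 1) * (x + 1) powr (- p) \<le> (p - 1) * z powr (- p)"
    using assms by (intro mult_left_mono) auto
  then show ?thesis
    using diff_eq assms by (simp add: pos_le_divide_eq mult.commute)
qed

lemma sums_diff_powr_shift:
  fixes x p :: real
  assumes "0 < x" "1 < p"
  shows "(\<lambda>n. ((x + real n) powr (1 - p) - (x + real n + 1) powr (1 - p)) / (p - 1))
    sums (x powr (1 - p) / (p - 1))"
proof -
  have "(\<lambda>n. (x + real n) powr (1 - p)) \<longlonglongrightarrow> 0"
    using assms by (intro tendsto_neg_powr filterlim_tendsto_add_at_top[OF tendsto_const]
        filterlim_real_sequentially) auto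
  from sums_divide[OF telescope_sums'[OF this], of "p - 1"] show ?thesis
    by (simp add: ac_simps)
qed

lemma summable_powr_shift_and_suminf_le:
  fixes x p :: real
  assumes "0 < x" "1 < p"
  shows "summable (\<lambda>n. (x + real n + 1) powr (- p)) \<and>
    (\<Sum>n. (x + real n + 1) powr (- p)) \<le> x powr (1 - p) / (p - 1)"
proof -
  let ?g = "\<lambda>n. ((x + real n) powr (1 - p) - (x + real n + 1) powr (1 - p)) / (p - 1)"
  have g_sums: "?g sums (x powr (1 - p) / (p - 1))"
    using sums_diff_powr_shift[OF assms] .
  have le_g: "(x + real n + 1) powr (- p) \<le> ?g n" for n
    using assms by (intro powr_succ_le_diff_powr) auto
  have summable: "summable (\<lambda>n. (x + real n + 1) powr (- p))"
    using le_g by (intro summable_comparison_test'[OF sums_summable[OF g_sums]]) simp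
  moreover have "(\<Sum>n. (x + real n + 1) powr (- p)) \<le> suminf ?g"
    using le_g summable sums_summable[OF g_sums] by (rule suminf_le)
  ultimately show ?thesis
    using sums_unique[OF g_sums] by simp
qed

lemma prod_inverse_powr_arith_progression_le:
  fixes a m t :: real and l :: nat
  assumes "1 \<le> a" "1 \<le> m" "0 < t"
  shows "(\<Prod>i\<in>{0..l}. 1 / (a + real i * m) powr t) \<le> (a + m) powr (- (t * real l))"
proof -
  have first_le: "1 / a powr t \<le> 1"
    using assms by (simp add: ge_one_powr_ge_zero)
  have rest_le: "1 / (a + real i * m) powr t \<le> (a + m) powr (- t)" if "1 \<le> i" for i
  proof -
    have "a + m \<le> a + real i * m"
      using that assms mult_right_mono[of 1 "real i" m] by simp
    then have "(a + real i * m) powr (- t) \<le> (a + m) powr (- t)"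
      using assms by (intro powr_mono2') auto
    then show ?thesis by (simp add: powr_minus divide_inverse)
  qed
  have "(\<Prod>i\<in>{0..l}. 1 / (a + real i * m) powr t)
      = 1 / a powr t * (\<Prod>i\<in>{1..l}. 1 / (a + real i * m) powr t)"
    by (simp add: prod.atLeast_Suc_atMost)
  also have "\<dots> \<le> 1 * (\<Prod>i\<in>{1..l}. (a + m) powr (- t))"
    using first_le rest_le by (intro mult_mono prod_mono prod_nonneg) auto
  also have "\<dots> = (a + m) powr (- (t * real l))"
    using assms by (simp add: powr_realpow[symmetric] powr_powr)
  finally show ?thesis .
qed

theorem lemma2p2:
  fixes s :: real and a l :: nat
  assumes "0 < s" and "s \<le> 1/2"
    and "1 \<le> a"
    and "2 * s * real l > 1"
  shows "summable (\<lambda>M::nat. \<Prod>i\<in>{0..l}. 1 / (real a + real i * real (M + 1)) powr (2 * s)) \<and>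
    (\<Sum>M::nat. \<Prod>i\<in>{0..l}. 1 / (real a + real i * real (M + 1)) powr (2 * s))
        \<le> 1 / real a powr (2 * s * real l - 1) * (2 * s * real l / (2 * s * real l - 1))"
proof -
  define p where "p = 2 * s * real l"
  let ?f = "\<lambda>M::nat. \<Prod>i\<in>{0..l}. 1 / (real a + real i * real (M + 1)) powr (2 * s)"
  have p_gt_1: "1 < p" and a_ge_1: "1 \<le> real a"
    using assms by (auto simp: p_def)
  have f_le: "?f M \<le> (real a + real M + 1) powr (- p)" for M
    using prod_inverse_powr_arith_progression_le[of "real a" "real (M + 1)" "2 * s" l] assms
    unfolding p_def by (simp add: ac_simps)
  have f_nonneg: "0 \<le> ?f M" for M
    by (intro prod_nonneg) simp
  have summable_tail: "summable (\<lambda>M. (real a + real M + 1) powr (- p))"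
    and suminf_tail: "(\<Sum>M. (real a + real M + 1) powr (- p)) \<le> real a powr (1 - p) / (p - 1)"
    using summable_powr_shift_and_suminf_le[of "real a" p] a_ge_1 p_gt_1 by simp_all
  have summable_f: "summable ?f"
    using f_le f_nonneg by (intro summable_comparison_test'[OF summable_tail]) simp
  have "suminf ?f \<le> real a powr (1 - p) / (p - 1)"
    using suminf_le[OF f_le summable_f summable_tail] suminf_tail by (rule order_trans)
  also have "\<dots> \<le> real a powr (1 - p) * (p / (p - 1))"
  proof -
    have "1 / (p - 1) \<le> p / (p - 1)"
      using p_gt_1 by (intro divide_right_mono) auto
    from mult_left_mono[OF this, of "real a powr (1 - p)"] show ?thesis by simp
  qed
  also have "real a powr (1 - p) = 1 / real a powr (p - 1)"
    using a_ge_1 by (simp add: powr_minus_divide[symmetric])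
  finally show ?thesis
    using summable_f unfolding p_def by simp
qed

end
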